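(* Let $K$ be a skew field, $V$ a left (topological) $K$-vector space with basis $v^0,v^1,\ldots$, $V'$ the dual right $K$-vector space with basis $p_0,p_1,\ldots$, with pairing $(\cdot,\cdot)$; let $\mathbf f\in V$, $\mathbf g\in V'$, $y_i^k=(v^k,p_i)$, $f_i=(\mathbf f,p_i)$, $g^k=(v^k,\mathbf g)$, and assume $D=(y_i^k)$ generic. Then for pairwise distinct $i_0,\ldots,i_m$ and pairwise distinct $k_0,\ldots,k_m$: (a) $(\Delta_R^m f)_{i_0\ldots i_m}^{k_0\ldots k_m}=\sum_{j=0}^m f_{i_j}\big(|D_{i_0\ldots i_m}^{k_0\ldots k_m}|_j^m\big)^{-1}$; (b) $(\Delta_L^m g)_{i_0\ldots i_m}^{k_0\ldots k_m}=\sum_{l=0}^m\big(|D_{i_0\ldots i_m}^{k_0\ldots k_m}|_m^l\big)^{-1}g^{k_l}$.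
   Context: The pairing $(\cdot,\cdot):V\times V'\to K$ is biadditive with $(\lambda v,p\mu)=\lambda(v,p)\mu$. $D$ is the infinite matrix with entry $y_i^k$ in row $k$, column $i$. $D_{i_0\ldots i_m}^{k_0\ldots k_m}$ is the $(m+1)\times(m+1)$ matrix whose entry in row $l$ and column $j$ ($0\le l,j\le m$) is $y_{i_j}^{k_l}$. Quasideterminants: for a square matrix $M$ over $K$ with rows and columns indexed by $\{0,\ldots,n\}$, let $M_a^b$ denote its entry in row $b$, column $a$; the $(a,b)$-quasideterminant is $|M|_a^b=M_a^b-r\,(M^{(b,a)})^{-1}c$, where $M^{(b,a)}$ is $M$ with row $b$ and column $a$ deleted, $r$ is row $b$ of $M$ with its column-$a$ entry deleted, and $c$ is column $a$ of $M$ with its row-$b$ entry deleted (for $n=0$, $|M|_0^0=M_0^0$). In the commutative case $|M|_a^b=(-1)^{a+b}\det M/\det M^{(b,a)}$. Difference derivatives: extend $i_0,\ldots,i_m$ and $k_0,\ldots,k_m$ to permutations of $\{0,1,\ldots\}$; for generic $D$ there are unique upper triangular $A=(a_m^j)$ and lower triangular $C=(c_l^m)$ such that $q_m=\sum_{j=0}^m p_{i_j}a_m^j$, $w^m=\sum_{l=0}^m c_l^m v^{k_l}$ satisfy $(w^m,q_{m'})=0$ for $m\ne m'$ and $(w^m,p_{i_m})=(v^{k_m},q_m)=1$ (so $q_m$ is the unique right combination of $p_{i_0},\ldots,p_{i_m}$ with $(v^{k_l},q_m)=\delta_{lm}$ for $l\le m$, and $w^m$ the unique left combination of $v^{k_0},\ldots,v^{k_m}$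 with $(w^m,p_{i_j})=\delta_{jm}$ for $j\le m$). Define $(\Delta_R^m f)_{i_0\ldots i_m}^{k_0\ldots k_m}=\sum_{j} f_{i_j}a_m^j=(\mathbf f,q_m)$ and $(\Delta_L^m g)_{i_0\ldots i_m}^{k_0\ldots k_m}=\sum_l c_l^m g^{k_l}=(w^m,\mathbf g)$. Genericity means all finite square submatrices of $D$ and quasideterminants that need to be inverted are invertible. *)

theory Defs
  imports Main
begin

text \<open>Square matrices of size n over a skew field are represented as functions
  M :: nat => nat => 'a, where M r c is the entry in row r and column c
  (indices 0..n-1; values outside are irrelevant).\<close>

definition mat_mul :: "nat \<Rightarrow> (nat \<Rightarrow> nat \<Rightarrow> 'a::division_ring) \<Rightarrow> (nat \<Rightarrow> nat \<Rightarrow> 'a) \<Rightarrow> nat \<Rightarrow> nat \<Rightarrow> 'a" where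
  "mat_mul n A B = (\<lambda>r c. \<Sum>t<n. A r t * B t c)"

definition is_mat_inverse :: "nat \<Rightarrow> (nat \<Rightarrow> nat \<Rightarrow> 'a::division_ring) \<Rightarrow> (nat \<Rightarrow> nat \<Rightarrow> 'a) \<Rightarrow> bool" where
  "is_mat_inverse n A B \<longleftrightarrow>
     (\<forall>r<n. \<forall>c<n. mat_mul n A B r c = (if r = c then 1 else 0)
                 \<and> mat_mul n B A r c = (if r = c then 1 else 0))"

definition mat_invertible :: "nat \<Rightarrow> (nat \<Rightarrow> nat \<Rightarrow> 'a::division_ring) \<Rightarrow> bool" where
  "mat_invertible n A \<longleftrightarrow> (\<exists>B. is_mat_inverse n A B)"

definition mat_inv :: "nat \<Rightarrow> (nat \<Rightarrow> nat \<Rightarrow> 'a::division_ring) \<Rightarrow> nat \<Rightarrow> nat \<Rightarrow> 'a" where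
  "mat_inv n A = (SOME B. is_mat_inverse n A B)"

definition skip :: "nat \<Rightarrow> nat \<Rightarrow> nat" where
  "skip x i = (if i < x then i else Suc i)"

text \<open>Quasideterminant |M|_a^b of an (n+1)x(n+1) matrix M (indices 0..n):
  M_a^b = M b a (row b, column a);
  |M|_a^b = M_a^b - r (M^(b,a))^-1 c, with r = row b without column a,
  c = column a without row b.\<close>
definition quasidet :: "nat \<Rightarrow> (nat \<Rightarrow> nat \<Rightarrow> 'a::division_ring) \<Rightarrow> nat \<Rightarrow> nat \<Rightarrow> 'a" where
  "quasidet n M a b =
     (let N = (\<lambda>r c. M (skip b r) (skip a c));
          Ni = mat_inv n N
      in M b a - (\<Sum>s<n. \<Sum>t<n. M b (skip a s) * Ni s t * M (skip b t) a))"

text \<open>y k i = y_i^k = (v^k, p_i). Submatrix D_{i_0..i_m}^{k_0..k_m}: row l, column j entry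
  y_{i_j}^{k_l}; indices are given as functions I, Kk on {0..m}.\<close>
definition subD :: "(nat \<Rightarrow> nat \<Rightarrow> 'a) \<Rightarrow> (nat \<Rightarrow> nat) \<Rightarrow> (nat \<Rightarrow> nat) \<Rightarrow> nat \<Rightarrow> nat \<Rightarrow> 'a" where
  "subD y I Kk = (\<lambda>l j. y (Kk l) (I j))"

definition generic :: "(nat \<Rightarrow> nat \<Rightarrow> 'a::division_ring) \<Rightarrow> bool" where
  "generic y \<longleftrightarrow>
     (\<forall>m I Kk. inj_on I {..m} \<longrightarrow> inj_on Kk {..m} \<longrightarrow>
        mat_invertible (Suc m) (subD y I Kk)
        \<and> (\<forall>a\<le>m. \<forall>b\<le>m. quasidet m (subD y I Kk) a b \<noteq> 0))"

text \<open>Coefficients a_m^j (j = 0..m) of q_m = sum_j p_{i_j} a_m^j, determined by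
  (v^{k_l}, q_m) = delta_{lm} for l <= m, i.e. sum_j y_{i_j}^{k_l} a_m^j = delta_{lm}.\<close>
definition coeffA :: "(nat \<Rightarrow> nat \<Rightarrow> 'a::division_ring) \<Rightarrow> (nat \<Rightarrow> nat) \<Rightarrow> (nat \<Rightarrow> nat) \<Rightarrow> nat \<Rightarrow> nat \<Rightarrow> 'a" where
  "coeffA y I Kk m = (THE a. (\<forall>j>m. a j = 0) \<and>
      (\<forall>l\<le>m. (\<Sum>j\<le>m. y (Kk l) (I j) * a j) = (if l = m then 1 else 0)))"

text \<open>Coefficients c_l^m (l = 0..m) of w^m = sum_l c_l^m v^{k_l}, determined by
  (w^m, p_{i_j}) = delta_{jm} for j <= m.\<close>
definition coeffC :: "(nat \<Rightarrow> nat \<Rightarrow> 'a::division_ring) \<Rightarrow> (nat \<Rightarrow> nat) \<Rightarrow> (nat \<Rightarrow> nat) \<Rightarrow> nat \<Rightarrow> nat \<Rightarrow> 'a" where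
  "coeffC y I Kk m = (THE c. (\<forall>l>m. c l = 0) \<and>
      (\<forall>j\<le>m. (\<Sum>l\<le>m. c l * y (Kk l) (I j)) = (if j = m then 1 else 0)))"

text \<open>(Delta_R^m f)_{i_0..i_m}^{k_0..k_m} = sum_j f_{i_j} a_m^j = (f, q_m), with f i = f_i = (f, p_i).\<close>
definition DeltaR :: "(nat \<Rightarrow> nat \<Rightarrow> 'a::division_ring) \<Rightarrow> (nat \<Rightarrow> 'a) \<Rightarrow> (nat \<Rightarrow> nat) \<Rightarrow> (nat \<Rightarrow> nat) \<Rightarrow> nat \<Rightarrow> 'a" where
  "DeltaR y f I Kk m = (\<Sum>j\<le>m. f (I j) * coeffA y I Kk m j)"

text \<open>(Delta_L^m g)_{i_0..i_m}^{k_0..k_m} = sum_l c_l^m g^{k_l} = (w^m, g), with g k = g^k = (v^k, g).\<close>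
definition DeltaL :: "(nat \<Rightarrow> nat \<Rightarrow> 'a::division_ring) \<Rightarrow> (nat \<Rightarrow> 'a) \<Rightarrow> (nat \<Rightarrow> nat) \<Rightarrow> (nat \<Rightarrow> nat) \<Rightarrow> nat \<Rightarrow> 'a" where
  "DeltaL y g I Kk m = (\<Sum>l\<le>m. coeffC y I Kk m l * g (Kk l))"

end

theory Submission
  imports Defs
begin

text \<open>The coefficients a_m^j and c_l^m solve linear systems with
  the matrix D, so they form the last column and the last row of its inverse B. Every entry of
  the inverse of a matrix M is an inverse quasideterminant: writing out the identity M B = 1 in
  the column b of B, the rows other than b express the remaining entries of that column through
  the inverse of the minor of M without row b and column a, and substituting them into row b
  gives |M|_a^b B_ab = 1.\<close>

lemma skip_neq [simp]: "skip b u \<noteq> b"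
  by (simp add: skip_def)

lemma skip_less_Suc: "u < n \<Longrightarrow> skip a u < Suc n"
  by (simp add: skip_def)

lemma inj_skip: "inj (skip a)"
  unfolding skip_def inj_def by auto

lemma skip_image_lessThan:
  assumes "a \<le> n"
  shows "skip a ` {..<n} = {..<Suc n} - {a}"
proof
  show "skip a ` {..<n} \<subseteq> {..<Suc n} - {a}"
    by (auto simp: skip_less_Suc)
  show "{..<Suc n} - {a} \<subseteq> skip a ` {..<n}"
  proof
    fix x assume "x \<in> {..<Suc n} - {a}"
    then have "x = skip a (if x < a then x else x - 1)" "(if x < a then x else x - 1) < n"
      using assms by (auto simp: skip_def)
    then show "x \<in> skip a ` {..<n}" by blast
  qed
qed

lemma sum_lessThan_Suc_skip:
  assumes "a \<le> n"
  shows "(\<Sum>t<Suc n. h t) = h a + (\<Sum>s<n. h (skip a s))"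
proof -
  have "(\<Sum>t<Suc n. h t) = h a + (\<Sum>t\<in>{..<Suc n} - {a}. h t)"
    using assms by (intro sum.remove) auto
  also have "(\<Sum>t\<in>{..<Suc n} - {a}. h t) = (\<Sum>s<n. h (skip a s))"
    by (simp add: skip_image_lessThan[OF assms, symmetric]
        sum.reindex[OF inj_on_subset[OF inj_skip subset_UNIV]])
  finally show ?thesis .
qed

lemma inj_on_comp_skip:
  assumes "inj_on I {..Suc n}"
  shows "inj_on (I \<circ> skip a) {..n}"
proof (rule comp_inj_on)
  show "inj_on (skip a) {..n}"
    using inj_skip by (rule inj_on_subset) simp
  show "inj_on I (skip a ` {..n})"
    using assms by (rule inj_on_subset) (auto simp: skip_def)
qed

lemma is_mat_inverse_mat_inv:
  "mat_invertible n A \<Longrightarrow> is_mat_inverse n A (mat_inv n A)"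
  by (metis mat_invertible_def mat_inv_def someI_ex)

lemma mat_invertible_0: "mat_invertible 0 A"
  by (simp add: mat_invertible_def is_mat_inverse_def)

lemma left_inverse_solves:
  fixes M B :: "nat \<Rightarrow> nat \<Rightarrow> 'a::division_ring"
  assumes BM: "\<And>r c. r < n \<Longrightarrow> c < n \<Longrightarrow> mat_mul n B M r c = (if r = c then 1 else 0)"
    and Mx: "\<And>r. r < n \<Longrightarrow> (\<Sum>c<n. M r c * x c) = e r"
    and j: "j < n"
  shows "x j = (\<Sum>r<n. B j r * e r)"
proof -
  have "x j = (\<Sum>c<n. (if j = c then 1 else 0) * x c)"
    using j by (simp add: of_bool_def[symmetric])
  also have "\<dots> = (\<Sum>c<n. (\<Sum>r<n. B j r * M r c) * x c)"
    using BM j by (intro sum.cong) (simp_all add: mat_mul_def)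
  also have "\<dots> = (\<Sum>r<n. B j r * (\<Sum>c<n. M r c * x c))"
    unfolding sum_distrib_left sum_distrib_right mult.assoc by (rule sum.swap)
  also have "\<dots> = (\<Sum>r<n. B j r * e r)"
    using Mx by simp
  finally show ?thesis .
qed

lemma right_inverse_solves:
  fixes M B :: "nat \<Rightarrow> nat \<Rightarrow> 'a::division_ring"
  assumes MB: "\<And>r c. r < n \<Longrightarrow> c < n \<Longrightarrow> mat_mul n M B r c = (if r = c then 1 else 0)"
    and xM: "\<And>c. c < n \<Longrightarrow> (\<Sum>r<n. x r * M r c) = e c"
    and j: "j < n"
  shows "x j = (\<Sum>c<n. e c * B c j)"
proof -
  have "x j = (\<Sum>r<n. x r * (if r = j then 1 else 0))"
    using j by (simp add: of_bool_def[symmetric])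
  also have "\<dots> = (\<Sum>r<n. x r * (\<Sum>c<n. M r c * B c j))"
    using MB j by (intro sum.cong) (simp_all add: mat_mul_def)
  also have "\<dots> = (\<Sum>c<n. (\<Sum>r<n. x r * M r c) * B c j)"
    unfolding sum_distrib_left sum_distrib_right mult.assoc by (rule sum.swap)
  also have "\<dots> = (\<Sum>c<n. e c * B c j)"
    using xM by simp
  finally show ?thesis .
qed

definition mat_minor :: "(nat \<Rightarrow> nat \<Rightarrow> 'a) \<Rightarrow> nat \<Rightarrow> nat \<Rightarrow> nat \<Rightarrow> nat \<Rightarrow> 'a" where
  "mat_minor M b a = (\<lambda>r c. M (skip b r) (skip a c))"

lemma quasidet_mat_minor:
  "quasidet n M a b =
     M b a - (\<Sum>s<n. \<Sum>t<n. M b (skip a s) * mat_inv n (mat_minor M b a) s t * M (skip b t) a)"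
  by (simp add: quasidet_def mat_minor_def)

lemma mat_inverse_entry_eq_inverse_quasidet:
  fixes M B :: "nat \<Rightarrow> nat \<Rightarrow> 'a::division_ring"
  assumes MB: "is_mat_inverse (Suc n) M B"
    and minor: "mat_invertible n (mat_minor M b a)"
    and a: "a \<le> n" and b: "b \<le> n"
  shows "B a b = inverse (quasidet n M a b)"
proof -
  define Ni where "Ni = mat_inv n (mat_minor M b a)"
  define x where "x s = B (skip a s) b" for s
  have Ni_left_inverse: "mat_mul n Ni (mat_minor M b a) r c = (if r = c then 1 else 0)" if "r < n" "c < n" for r c
    using is_mat_inverse_mat_inv[OF minor] that unfolding is_mat_inverse_def Ni_def by blast
  have col_b: "(\<Sum>t<Suc n. M r t * B t b) = (if r = b then 1 else 0)" if "r < Suc n" for r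
    using MB that b by (simp add: is_mat_inverse_def mat_mul_def)
  have minor_rows: "(\<Sum>s<n. mat_minor M b a u s * x s) = - (M (skip b u) a * B a b)"
    if u: "u < n" for u
    using col_b[OF skip_less_Suc[OF u]] sum_lessThan_Suc_skip[OF a, of "\<lambda>t. M (skip b u) t * B t b"]
    by (simp add: mat_minor_def x_def eq_neg_iff_add_eq_0 add.commute)
  have x: "x v = - (\<Sum>u<n. Ni v u * M (skip b u) a) * B a b" if v: "v < n" for v
  proof -
    have "x v = (\<Sum>u<n. Ni v u * - (M (skip b u) a * B a b))"
      by (rule left_inverse_solves[OF Ni_left_inverse minor_rows v])
    then show ?thesis
      by (simp add: sum_distrib_right sum_negf mult.assoc)
  qed
  have "M b a * B a b + (\<Sum>s<n. M b (skip a s) * x s) = 1"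
    using col_b[of b] b sum_lessThan_Suc_skip[OF a, of "\<lambda>t. M b t * B t b"]
    by (simp add: x_def)
  also have "(\<Sum>s<n. M b (skip a s) * x s)
      = - (\<Sum>s<n. \<Sum>t<n. M b (skip a s) * Ni s t * M (skip b t) a) * B a b"
    using x by (simp add: sum_distrib_left sum_distrib_right sum_negf mult.assoc)
  finally have "quasidet n M a b * B a b = 1"
    by (simp add: quasidet_mat_minor Ni_def algebra_simps)
  then show ?thesis
    by (rule inverse_unique[symmetric])
qed

lemma mat_minor_subD: "mat_minor (subD y I Kk) b a = subD y (I \<circ> skip a) (Kk \<circ> skip b)"
  by (simp add: mat_minor_def subD_def)

lemma generic_subD_invertible:
  assumes "generic y" "inj_on I {..m}" "inj_on Kk {..m}"
  shows "mat_invertible (Suc m) (subD y I Kk)"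
  using assms unfolding generic_def by blast

lemma generic_mat_minor_invertible:
  assumes gen: "generic y" and I: "inj_on I {..m}" and Kk: "inj_on Kk {..m}"
  shows "mat_invertible m (mat_minor (subD y I Kk) b a)"
proof (cases m)
  case 0
  then show ?thesis by (simp add: mat_invertible_0)
next
  case (Suc n)
  then show ?thesis
    using generic_subD_invertible[OF gen inj_on_comp_skip inj_on_comp_skip] I Kk
    by (simp add: mat_minor_subD)
qed

lemma generic_mat_inv_entry:
  fixes y :: "nat \<Rightarrow> nat \<Rightarrow> 'a::division_ring"
  assumes "generic y" "inj_on I {..m}" "inj_on Kk {..m}" "a \<le> m" "b \<le> m"
  shows "mat_inv (Suc m) (subD y I Kk) a b = inverse (quasidet m (subD y I Kk) a b)"
  using assms
  by (intro mat_inverse_entry_eq_inverse_quasidet is_mat_inverse_mat_inv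
        generic_subD_invertible generic_mat_minor_invertible)

lemma coeffA_eq_last_column:
  assumes B: "is_mat_inverse (Suc m) (subD y I Kk) B"
  shows "coeffA y I Kk m = (\<lambda>j. if j \<le> m then B j m else 0)"
  unfolding coeffA_def
proof (rule the_equality)
  show "(\<forall>j>m. (if j \<le> m then B j m else 0) = 0) \<and>
      (\<forall>l\<le>m. (\<Sum>j\<le>m. y (Kk l) (I j) * (if j \<le> m then B j m else 0)) = (if l = m then 1 else 0))"
    using B by (simp add: is_mat_inverse_def mat_mul_def subD_def lessThan_Suc_atMost)
next
  fix a' assume a': "(\<forall>j>m. a' j = 0) \<and>
      (\<forall>l\<le>m. (\<Sum>j\<le>m. y (Kk l) (I j) * a' j) = (if l = m then 1 else 0))"
  have "a' j = B j m" if "j \<le> m" for j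
    using left_inverse_solves[of "Suc m" B "subD y I Kk" a' "\<lambda>l. if l = m then 1 else 0" j]
      B a' that
    by (simp add: is_mat_inverse_def subD_def lessThan_Suc_atMost of_bool_def[symmetric])
  with a' show "a' = (\<lambda>j. if j \<le> m then B j m else 0)"
    by (auto simp: not_le)
qed

lemma coeffC_eq_last_row:
  assumes B: "is_mat_inverse (Suc m) (subD y I Kk) B"
  shows "coeffC y I Kk m = (\<lambda>l. if l \<le> m then B m l else 0)"
  unfolding coeffC_def
proof (rule the_equality)
  show "(\<forall>l>m. (if l \<le> m then B m l else 0) = 0) \<and>
      (\<forall>j\<le>m. (\<Sum>l\<le>m. (if l \<le> m then B m l else 0) * y (Kk l) (I j)) = (if j = m then 1 else 0))"
    using B by (simp add: is_mat_inverse_def mat_mul_def subD_def lessThan_Suc_atMost)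
next
  fix c' assume c': "(\<forall>l>m. c' l = 0) \<and>
      (\<forall>j\<le>m. (\<Sum>l\<le>m. c' l * y (Kk l) (I j)) = (if j = m then 1 else 0))"
  have "c' l = B m l" if "l \<le> m" for l
    using right_inverse_solves[of "Suc m" "subD y I Kk" B c' "\<lambda>j. if j = m then 1 else 0" l]
      B c' that
    by (simp add: is_mat_inverse_def subD_def lessThan_Suc_atMost of_bool_def[symmetric])
  with c' show "c' = (\<lambda>l. if l \<le> m then B m l else 0)"
    by (auto simp: not_le)
qed

theorem theorem4:
  fixes y :: "nat \<Rightarrow> nat \<Rightarrow> 'a::division_ring"
    and f g :: "nat \<Rightarrow> 'a"
    and I Kk :: "nat \<Rightarrow> nat"
    and m :: nat
  assumes gen: "generic y"
    and distI: "inj_on I {..m}"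
    and distK: "inj_on Kk {..m}"
  shows "DeltaR y f I Kk m
           = (\<Sum>j\<le>m. f (I j) * inverse (quasidet m (subD y I Kk) j m))
         \<and> DeltaL y g I Kk m
           = (\<Sum>l\<le>m. inverse (quasidet m (subD y I Kk) m l) * g (Kk l))"
proof -
  let ?B = "mat_inv (Suc m) (subD y I Kk)"
  have B: "is_mat_inverse (Suc m) (subD y I Kk) ?B"
    by (intro is_mat_inverse_mat_inv generic_subD_invertible gen distI distK)
  have "DeltaR y f I Kk m = (\<Sum>j\<le>m. f (I j) * inverse (quasidet m (subD y I Kk) j m))"
    unfolding DeltaR_def coeffA_eq_last_column[OF B]
    by (intro sum.cong) (simp_all add: generic_mat_inv_entry[OF gen distI distK])
  moreover have "DeltaL y g I Kk m = (\<Sum>l\<le>m. inverse (quasidet m (subD y I Kk) m l) * g (Kk l))"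
    unfolding DeltaL_def coeffC_eq_last_row[OF B]
    by (intro sum.cong) (simp_all add: generic_mat_inv_entry[OF gen distI distK])
  ultimately show ?thesis ..
qed

end
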